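(* Let $0<\varepsilon\leq 1/2$ be a constant and $0<\alpha\le 1$. For a subset $S\subseteq\mathbb{Z}_p$ chosen uniformly at random among the subsets of $\mathbb{Z}_p$ of size $p^{\varepsilon}$, its generic $\alpha$-complexity satisfies $$\mathcal{C}_\alpha(S)>\frac{\alpha|S|}{\ln p}$$ with probability at least $1-1/p$, for all sufficiently large primes $p$.
   Context: $\mathbb{Z}_p$ is the field of residues modulo a prime $p$. For $L\subseteq\mathbb{Z}_p^2$, $I(L)=\{x\in\mathbb{Z}_p\mid \exists (a,b),(a',b')\in L,\ (a,b)\neq(a',b'),\ ax+b=a'x+b'\}$. For $S\subseteq\mathbb{Z}_p$ and $0<\alpha\leq1$, the generic $\alpha$-complexity $\mathcal{C}_\alpha(S)$ is the smallest cardinality of a set $L\subseteq\mathbb{Z}_p^2$ with $|S\cap I(L)|\geq\alpha|S|$. *)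

theory Defs
  imports Complex_Main "HOL-Computational_Algebra.Primes"
begin

text \<open>Residues modulo p are represented by the naturals 0..p-1; arithmetic is taken mod p.
  A line is a pair (a,b) in Z_p^2 representing x |-> a*x+b.\<close>

definition Zp :: "nat \<Rightarrow> nat set" where
  "Zp p = {0..<p}"

definition intersections :: "nat \<Rightarrow> (nat \<times> nat) set \<Rightarrow> nat set" where
  "intersections p L = {x \<in> Zp p. \<exists>a b a' b'. (a, b) \<in> L \<and> (a', b') \<in> L \<and> (a, b) \<noteq> (a', b')
       \<and> (a * x + b) mod p = (a' * x + b') mod p}"

definition generic_complexity :: "nat \<Rightarrow> real \<Rightarrow> nat set \<Rightarrow> nat" where
  "generic_complexity p \<alpha> S = (LEAST n. \<exists>L. L \<subseteq> Zp p \<times> Zp p \<and> card L = n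
       \<and> real (card (S \<inter> intersections p L)) \<ge> \<alpha> * real (card S))"

end

theory Submission
  imports Defs "HOL-Number_Theory.Cong" "HOL-Real_Asymp.Real_Asymp"
begin

(* Let k = |S| and suppose C_alpha(S) <= n := floor(alpha k / ln p). Then some nonempty set L of
   at most n lines has at least m := ceil(alpha k) of its intersection points in S. Two distinct
   lines over Z_p meet at most once, so I(L) has at most n^2 points, and L is the set of entries
   of one of the p^(2n) n-tuples of lines. For a fixed J with |J| <= n^2, at most
   C(|J|,m) C(p-m,k-m) <= C(p,k) 2^k (n^2/p)^m of the k-subsets of Z_p contain m points of J.
   So at most a fraction p^(2n) 2^k (n^2/p)^m of all k-sets has low complexity, and since
   ln p <= k <= sqrt p and ln ln p grows without bound, taking logarithms shows this is <= 1/p. *)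

lemma nat_eq_if_int_dvd_diff:
  fixes u v p :: nat
  assumes "int p dvd int u - int v" "u < p" "v < p"
  shows "u = v"
  using assms by (metis cong_iff_dvd_diff cong_int_iff cong_less_imp_eq_nat le0)

lemma card_line_meet_le_1:
  assumes "prime p" "a < p" "b < p" "a' < p" "b' < p" "(a, b) \<noteq> (a', b')"
  shows "card {x \<in> Zp p. (a * x + b) mod p = (a' * x + b') mod p} \<le> 1"
proof -
  have line_dvd: "int p dvd (int a - int a') * int x + (int b - int b')"
    if "(a * x + b) mod p = (a' * x + b') mod p" for x
  proof -
    have "[a * x + b = a' * x + b'] (mod p)"
      unfolding Cong.cong_def by (rule that)
    then have "int p dvd int (a * x + b) - int (a' * x + b')"
      by (simp only: cong_int_iff[symmetric] cong_iff_dvd_diff)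
    moreover have "int (a * x + b) - int (a' * x + b') = (int a - int a') * int x + (int b - int b')"
      by (simp add: algebra_simps)
    ultimately show ?thesis by metis
  qed
  define M where "M = {x \<in> Zp p. (a * x + b) mod p = (a' * x + b') mod p}"
  have "x = y" if "x \<in> M" "y \<in> M" for x y
  proof -
    have "(int a - int a') * int x + (int b - int b') - ((int a - int a') * int y + (int b - int b'))
        = (int a - int a') * (int x - int y)" by (simp add: algebra_simps)
    then have "int p dvd (int a - int a') * (int x - int y)"
      using dvd_diff[OF line_dvd line_dvd] that unfolding M_def by fastforce
    moreover have "prime (int p)" using assms(1) by simp
    ultimately have "int p dvd int a - int a' \<or> int p dvd int x - int y"
      using prime_dvd_mult_iff by blast
    then show "x = y"
    proof
      assume "int p dvd int a - int a'"
      then have "a = a'" using assms(2,4) by (rule nat_eq_if_int_dvd_diff)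
      then have "int p dvd int b - int b'" using line_dvd[of x] that(1) unfolding M_def by simp
      then have "b = b'" using assms(3,5) by (rule nat_eq_if_int_dvd_diff)
      with \<open>a = a'\<close> show ?thesis using assms(6) by simp
    next
      assume "int p dvd int x - int y"
      moreover have "x < p" "y < p" using that unfolding M_def Zp_def by auto
      ultimately show "x = y" by (rule nat_eq_if_int_dvd_diff)
    qed
  qed
  moreover have "finite M" unfolding M_def Zp_def by simp
  ultimately show ?thesis unfolding M_def[symmetric] using card_le_Suc0_iff_eq by (metis One_nat_def)
qed

lemma card_intersections_le:
  assumes "prime p" "L \<subseteq> Zp p \<times> Zp p"
  shows "card (intersections p L) \<le> card L ^ 2"
proof -
  define meet where "meet = (\<lambda>((a, b), (a', b')). {x \<in> Zp p. (a * x + b) mod p = (a' * x + b') mod p})"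
  define D where "D = {(l, l') \<in> L \<times> L. l \<noteq> l'}"
  have fin: "finite L" using assms(2) finite_subset by (auto simp: Zp_def)
  then have "finite D" unfolding D_def by (auto intro: finite_subset[of _ "L \<times> L"])
  have "intersections p L = (\<Union>q\<in>D. meet q)"
    unfolding intersections_def meet_def D_def by fast
  then have "card (intersections p L) \<le> (\<Sum>q\<in>D. card (meet q))"
    using \<open>finite D\<close> by (simp add: card_UN_le)
  also have "\<dots> \<le> (\<Sum>q\<in>D. 1)"
  proof (rule sum_mono)
    fix q assume "q \<in> D"
    then obtain a b a' b' where "q = ((a, b), (a', b'))" "(a, b) \<noteq> (a', b')"
      "a < p" "b < p" "a' < p" "b' < p"
      using assms(2) unfolding D_def Zp_def by fastforce
    then show "card (meet q) \<le> 1" unfolding meet_def using card_line_meet_le_1 assms(1) by simp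
  qed
  also have "\<dots> = card D" by simp
  also have "\<dots> \<le> card (L \<times> L)"
    using fin by (intro card_mono) (auto simp: D_def)
  finally show ?thesis by (simp add: card_cartesian_product power2_eq_square)
qed

lemma intersections_all_lines:
  assumes "1 < p"
  shows "intersections p (Zp p \<times> Zp p) = Zp p"
proof -
  have "x \<in> intersections p (Zp p \<times> Zp p)" if "x \<in> Zp p" for x
    \<comment> \<open>the lines y \<mapsto> y and y \<mapsto> x meet at x\<close>
    unfolding intersections_def using that assms
    by (intro CollectI conjI exI[of _ 1] exI[of _ 0] exI[of _ 0] exI[of _ x]) (auto simp: Zp_def)
  then show ?thesis unfolding intersections_def by blast
qed

lemma generic_complexity_attained:
  assumes "1 < p" "S \<subseteq> Zp p" "\<alpha> \<le> 1"
  obtains L where "L \<subseteq> Zp p \<times> Zp p" "card L = generic_complexity p \<alpha> S"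
    "\<alpha> * real (card S) \<le> real (card (S \<inter> intersections p L))"
proof -
  have "\<alpha> * real (card S) \<le> real (card (S \<inter> intersections p (Zp p \<times> Zp p)))"
    using intersections_all_lines[OF assms(1)] Int_absorb2[OF assms(2)]
      mult_right_mono[OF assms(3), of "real (card S)"] by simp
  then have "\<exists>n L. L \<subseteq> Zp p \<times> Zp p \<and> card L = n
      \<and> \<alpha> * real (card S) \<le> real (card (S \<inter> intersections p L))" by blast
  from LeastI_ex[OF this] show ?thesis
    using that unfolding generic_complexity_def by blast
qed

lemma low_complexity_witness:
  assumes "prime p" "0 < \<alpha>" "\<alpha> \<le> 1" "S \<subseteq> Zp p" "S \<noteq> {}" "generic_complexity p \<alpha> S \<le> n"
  obtains L where "L \<subseteq> Zp p \<times> Zp p" "L \<noteq> {}" "card L \<le> n"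
    "nat \<lceil>\<alpha> * real (card S)\<rceil> \<le> card (S \<inter> intersections p L)"
proof -
  obtain L where L: "L \<subseteq> Zp p \<times> Zp p" "card L = generic_complexity p \<alpha> S"
    and covered: "\<alpha> * real (card S) \<le> real (card (S \<inter> intersections p L))"
    using generic_complexity_attained[OF prime_gt_1_nat[OF assms(1)] assms(4,3)] by blast
  have "0 < card S" using assms(5) finite_subset[OF assms(4)] by (simp add: Zp_def card_gt_0_iff)
  then have "L \<noteq> {}"
    using covered assms(2) by (auto simp: intersections_def mult_le_0_iff)
  moreover have "nat \<lceil>\<alpha> * real (card S)\<rceil> \<le> card (S \<inter> intersections p L)"
    using covered by (simp add: nat_ceiling_le_eq)
  ultimately show ?thesis using that L assms(6) by simp
qed

lemma card_nonempty_subsets_le_power: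
  assumes "finite A"
  shows "card {L. L \<subseteq> A \<and> L \<noteq> {} \<and> card L \<le> n} \<le> card A ^ n"
proof -
  have "{L. L \<subseteq> A \<and> L \<noteq> {} \<and> card L \<le> n} \<subseteq> set ` {xs. set xs \<subseteq> A \<and> length xs = n}"
  proof
    fix L assume "L \<in> {L. L \<subseteq> A \<and> L \<noteq> {} \<and> card L \<le> n}"
    then have L: "L \<subseteq> A" "L \<noteq> {}" "card L \<le> n" by simp_all
    then obtain ys where ys: "set ys = L" "distinct ys"
      using finite_distinct_list finite_subset assms by metis
    define xs where "xs = ys @ replicate (n - length ys) (hd ys)"
    have "set xs = L" "length xs = n"
      using ys L by (auto simp: xs_def distinct_card[symmetric])
    then show "L \<in> set ` {xs. set xs \<subseteq> A \<and> length xs = n}" using L by blast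
  qed
  then have "card {L. L \<subseteq> A \<and> L \<noteq> {} \<and> card L \<le> n} \<le> card (set ` {xs. set xs \<subseteq> A \<and> length xs = n})"
    using assms by (intro card_mono) (simp_all add: finite_lists_length_eq)
  also have "\<dots> \<le> card {xs. set xs \<subseteq> A \<and> length xs = n}"
    using assms by (intro card_image_le) (simp add: finite_lists_length_eq)
  finally show ?thesis using assms by (simp add: card_lists_length_eq)
qed

lemma card_subsets_filter:
  assumes "finite A"
  shows "card {S. S \<subseteq> A \<and> card S = k \<and> P S} + card {S. S \<subseteq> A \<and> card S = k \<and> \<not> P S}
    = card A choose k"
proof -
  have "{S. S \<subseteq> A \<and> card S = k} =
      {S. S \<subseteq> A \<and> card S = k \<and> P S} \<union> {S. S \<subseteq> A \<and> card S = k \<and> \<not> P S}" by blast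
  then show ?thesis
    using assms n_subsets[OF assms, of k] by (simp add: card_Un_disjoint[symmetric] disjoint_iff)
qed

lemma card_supersets_le:
  assumes "finite A" "T \<subseteq> A"
  shows "card {S. T \<subseteq> S \<and> S \<subseteq> A \<and> card S = k} \<le> (card A - card T) choose (k - card T)"
proof -
  have fin: "finite T" using assms finite_subset by blast
  have "card {S. T \<subseteq> S \<and> S \<subseteq> A \<and> card S = k} \<le> card {R. R \<subseteq> A - T \<and> card R = k - card T}"
  proof (rule card_inj_on_le[where f = "\<lambda>S. S - T"])
    show "inj_on (\<lambda>S. S - T) {S. T \<subseteq> S \<and> S \<subseteq> A \<and> card S = k}"
      by (rule inj_onI) blast
    show "(\<lambda>S. S - T) ` {S. T \<subseteq> S \<and> S \<subseteq> A \<and> card S = k} \<subseteq> {R. R \<subseteq> A - T \<and> card R = k - card T}"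
      using card_Diff_subset[OF fin] by auto
    show "finite {R. R \<subseteq> A - T \<and> card R = k - card T}" using assms(1) by simp
  qed
  also have "\<dots> = (card A - card T) choose (k - card T)"
    using assms by (simp add: n_subsets card_Diff_subset[OF fin])
  finally show ?thesis .
qed

lemma card_subsets_meeting_le:
  fixes A :: "'a set"
  assumes "finite A" "finite F" "\<forall>J\<in>F. J \<subseteq> A"
  shows "card {S. S \<subseteq> A \<and> card S = k \<and> (\<exists>J\<in>F. m \<le> card (S \<inter> J))}
    \<le> (\<Sum>J\<in>F. (card J choose m) * ((card A - m) choose (k - m)))"
proof -
  define Above where "Above = (\<lambda>T :: 'a set. {S. T \<subseteq> S \<and> S \<subseteq> A \<and> card S = k})"
  define Within where "Within = (\<lambda>J :: 'a set. {T. T \<subseteq> J \<and> card T = m})"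
  have fin_Within: "finite (Within J)" if "J \<in> F" for J
  proof -
    have "finite J" using that assms finite_subset by blast
    then show ?thesis unfolding Within_def by (auto intro: finite_subset[of _ "Pow J"])
  qed
  have cover: "{S. S \<subseteq> A \<and> card S = k \<and> (\<exists>J\<in>F. m \<le> card (S \<inter> J))} \<subseteq> (\<Union>J\<in>F. \<Union>T\<in>Within J. Above T)"
  proof
    fix S assume "S \<in> {S. S \<subseteq> A \<and> card S = k \<and> (\<exists>J\<in>F. m \<le> card (S \<inter> J))}"
    then obtain J where S: "S \<subseteq> A" "card S = k" and "J \<in> F" "m \<le> card (S \<inter> J)" by blast
    then obtain T where "T \<subseteq> S \<inter> J" "card T = m" by (meson obtain_subset_with_card_n)
    then have "T \<in> Within J" "S \<in> Above T" using S unfolding Within_def Above_def by auto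
    with \<open>J \<in> F\<close> show "S \<in> (\<Union>J\<in>F. \<Union>T\<in>Within J. Above T)" by blast
  qed
  have "finite (\<Union>J\<in>F. \<Union>T\<in>Within J. Above T)"
    by (rule finite_subset[of _ "Pow A"]) (auto simp: Above_def assms(1))
  then have "card {S. S \<subseteq> A \<and> card S = k \<and> (\<exists>J\<in>F. m \<le> card (S \<inter> J))} \<le> card (\<Union>J\<in>F. \<Union>T\<in>Within J. Above T)"
    using cover by (rule card_mono)
  also have "\<dots> \<le> (\<Sum>J\<in>F. \<Sum>T\<in>Within J. card (Above T))"
    using assms(2) fin_Within by (intro order.trans[OF card_UN_le] sum_mono card_UN_le)
  also have "\<dots> \<le> (\<Sum>J\<in>F. \<Sum>T\<in>Within J. (card A - m) choose (k - m))"
  proof (intro sum_mono)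
    fix J T assume "J \<in> F" "T \<in> Within J"
    then have "T \<subseteq> A" "card T = m" using assms(3) unfolding Within_def by auto
    then show "card (Above T) \<le> (card A - m) choose (k - m)"
      unfolding Above_def using card_supersets_le[OF assms(1), of T k] by simp
  qed
  also have "\<dots> = (\<Sum>J\<in>F. (card J choose m) * ((card A - m) choose (k - m)))"
    using assms(3) finite_subset[OF _ assms(1)] unfolding Within_def
    by (intro sum.cong) (simp_all add: n_subsets)
  finally show ?thesis .
qed

lemma choose_mult_power_le:
  fixes a n m :: nat
  assumes "a \<le> n"
  shows "real (a choose m) * real n ^ m \<le> real (n choose m) * real a ^ m"
proof (cases "m \<le> a")
  case False
  then show ?thesis by (simp add: binomial_eq_0)
next
  case True
  have power_as_prod: "x ^ m = (\<Prod>i = 0..<m. x)" for x :: real by simp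
  have "real (a choose m) * real n ^ m = (\<Prod>i = 0..<m. real (a - i) / real (m - i) * real n)"
    by (simp only: binomial_altdef_of_nat[OF True] power_as_prod prod.distrib)
  also have "\<dots> \<le> (\<Prod>i = 0..<m. real (n - i) / real (m - i) * real a)"
  proof (rule prod_mono)
    fix i assume "i \<in> {0..<m}"
    have "real i * real a \<le> real i * real n" using assms by (simp add: mult_left_mono)
    then have "real (a - i) * real n \<le> real (n - i) * real a"
      using \<open>i \<in> {0..<m}\<close> True assms by (simp add: of_nat_diff algebra_simps)
    then show "0 \<le> real (a - i) / real (m - i) * real n \<and>
        real (a - i) / real (m - i) * real n \<le> real (n - i) / real (m - i) * real a"
      by (simp add: divide_right_mono times_divide_eq_left)
  qed
  also have "\<dots> = real (n choose m) * real a ^ m"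
    using True assms
    by (simp only: binomial_altdef_of_nat[of m n] power_as_prod prod.distrib)
  finally show ?thesis .
qed

lemma choose_mult_choose_le:
  fixes a j n m k :: nat
  assumes "a \<le> n" "a \<le> j" "m \<le> k" "k \<le> n"
  shows "real (a choose m) * real ((n - m) choose (k - m))
    \<le> real (n choose k) * 2 ^ k * (real j / real n) ^ m"
proof (cases "n = 0")
  case True
  then show ?thesis using assms by simp
next
  case False
  have "real (a choose m) \<le> real (n choose m) * (real a / real n) ^ m"
    using choose_mult_power_le[OF assms(1), of m] False by (simp add: power_divide field_simps)
  also have "\<dots> \<le> real (n choose m) * (real j / real n) ^ m"
    using assms(2) by (intro mult_left_mono power_mono divide_right_mono) auto
  finally have "real (a choose m) * real ((n - m) choose (k - m))
      \<le> real (n choose m) * (real j / real n) ^ m * real ((n - m) choose (k - m))"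
    by (rule mult_right_mono) simp
  also have "\<dots> = real (n choose m) * real ((n - m) choose (k - m)) * (real j / real n) ^ m"
    by (simp only: mult_ac)
  also have "\<dots> = real (n choose k) * real (k choose m) * (real j / real n) ^ m"
    using choose_mult[OF assms(3,4)] by (metis of_nat_mult)
  also have "\<dots> \<le> real (n choose k) * 2 ^ k * (real j / real n) ^ m"
    using binomial_le_pow2[of k m] by (intro mult_right_mono mult_left_mono) (simp_all flip: of_nat_power)
  finally show ?thesis .
qed

lemma card_subsets_meeting_le_power:
  fixes A :: "'a set"
  assumes "finite A" "finite F" "\<forall>J\<in>F. J \<subseteq> A \<and> card J \<le> j" "m \<le> k" "k \<le> card A"
  shows "real (card {S. S \<subseteq> A \<and> card S = k \<and> (\<exists>J\<in>F. m \<le> card (S \<inter> J))})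
    \<le> real (card F) * (real (card A choose k) * 2 ^ k * (real j / real (card A)) ^ m)"
proof -
  have "card {S. S \<subseteq> A \<and> card S = k \<and> (\<exists>J\<in>F. m \<le> card (S \<inter> J))}
      \<le> (\<Sum>J\<in>F. (card J choose m) * ((card A - m) choose (k - m)))"
    using card_subsets_meeting_le[OF assms(1,2)] assms(3) by blast
  then have "real (card {S. S \<subseteq> A \<and> card S = k \<and> (\<exists>J\<in>F. m \<le> card (S \<inter> J))})
      \<le> real (\<Sum>J\<in>F. (card J choose m) * ((card A - m) choose (k - m)))"
    by (rule of_nat_mono)
  also have "\<dots> = (\<Sum>J\<in>F. real (card J choose m) * real ((card A - m) choose (k - m)))"
    by simp
  also have "\<dots> \<le> (\<Sum>J\<in>F. real (card A choose k) * 2 ^ k * (real j / real (card A)) ^ m)"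
  proof (rule sum_mono)
    fix J assume "J \<in> F"
    then have "J \<subseteq> A" "card J \<le> j" using assms(3) by auto
    then have "card J \<le> card A" "card J \<le> j" using assms(1) by (simp_all add: card_mono)
    then show "real (card J choose m) * real ((card A - m) choose (k - m))
        \<le> real (card A choose k) * 2 ^ k * (real j / real (card A)) ^ m"
      using assms(4,5) by (rule choose_mult_choose_le)
  qed
  finally show ?thesis by simp
qed

lemma card_low_complexity_le:
  assumes "prime p" "0 < \<alpha>" "\<alpha> \<le> 1" "0 < k" "k \<le> p"
    and m: "m = nat \<lceil>\<alpha> * real k\<rceil>"
  shows "real (card {S. S \<subseteq> Zp p \<and> card S = k \<and> generic_complexity p \<alpha> S \<le> n})
    \<le> real p ^ (2 * n) * 2 ^ k * (real n ^ 2 / real p) ^ m * real (p choose k)"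
proof -
  define Ls where "Ls = {L. L \<subseteq> Zp p \<times> Zp p \<and> L \<noteq> {} \<and> card L \<le> n}"
  define F where "F = intersections p ` Ls"
  have finZ: "finite (Zp p)" "card (Zp p) = p" by (simp_all add: Zp_def)
  have "card F \<le> card Ls" unfolding F_def Ls_def by (rule card_image_le) (simp add: finZ)
  also have "\<dots> \<le> card (Zp p \<times> Zp p) ^ n"
    unfolding Ls_def by (rule card_nonempty_subsets_le_power) (simp add: finZ)
  finally have card_F: "card F \<le> p ^ (2 * n)"
    by (simp add: finZ card_cartesian_product power_mult power2_eq_square)
  have "finite F" unfolding F_def Ls_def by (simp add: finZ)
  have F_bound: "\<forall>J\<in>F. J \<subseteq> Zp p \<and> card J \<le> n ^ 2"
  proof
    fix J assume "J \<in> F"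
    obtain L where L: "L \<subseteq> Zp p \<times> Zp p" "card L \<le> n" and J: "J = intersections p L"
      using \<open>J \<in> F\<close> unfolding F_def Ls_def by blast
    have "card J \<le> card L ^ 2" unfolding J by (rule card_intersections_le[OF assms(1) L(1)])
    also have "\<dots> \<le> n ^ 2" using L(2) by (rule power_mono) simp
    finally show "J \<subseteq> Zp p \<and> card J \<le> n ^ 2" unfolding J intersections_def by auto
  qed
  have "m \<le> k"
    using mult_right_mono[OF assms(3), of "real k"] unfolding m by (simp add: nat_ceiling_le_eq)
  have "{S. S \<subseteq> Zp p \<and> card S = k \<and> generic_complexity p \<alpha> S \<le> n}
      \<subseteq> {S. S \<subseteq> Zp p \<and> card S = k \<and> (\<exists>J\<in>F. m \<le> card (S \<inter> J))}"
  proof safe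
    fix S assume S: "S \<subseteq> Zp p" "generic_complexity p \<alpha> S \<le> n" "k = card S"
    then have "S \<noteq> {}" using assms(4) by auto
    then obtain L where L: "L \<subseteq> Zp p \<times> Zp p" "L \<noteq> {}" "card L \<le> n"
      and "nat \<lceil>\<alpha> * real (card S)\<rceil> \<le> card (S \<inter> intersections p L)"
      using low_complexity_witness[OF assms(1,2,3) S(1) _ S(2)] by blast
    then have "m \<le> card (S \<inter> intersections p L)" using S(3) m by simp
    moreover have "intersections p L \<in> F" using L unfolding F_def Ls_def by blast
    ultimately show "\<exists>J\<in>F. m \<le> card (S \<inter> J)" by blast
  qed
  then have "real (card {S. S \<subseteq> Zp p \<and> card S = k \<and> generic_complexity p \<alpha> S \<le> n})
      \<le> real (card {S. S \<subseteq> Zp p \<and> card S = k \<and> (\<exists>J\<in>F. m \<le> card (S \<inter> J))})"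
    by (intro of_nat_mono card_mono) (simp add: finZ)
  also have "\<dots> \<le> real (card F) * (real (p choose k) * 2 ^ k * (real n ^ 2 / real p) ^ m)"
    using card_subsets_meeting_le_power[OF finZ(1) \<open>finite F\<close> F_bound \<open>m \<le> k\<close>] assms(5)
    by (simp add: finZ)
  also have "\<dots> \<le> real p ^ (2 * n) * (real (p choose k) * 2 ^ k * (real n ^ 2 / real p) ^ m)"
    using card_F by (intro mult_right_mono) (simp_all flip: of_nat_power)
  finally show ?thesis by (simp only: mult_ac)
qed

lemma square_ratio_le_inverse_ln_square:
  fixes P \<alpha> :: real and k n :: nat
  assumes "0 < P" "1 < ln P" "\<alpha> \<le> 1" "real n \<le> \<alpha> * real k / ln P" "real k ^ 2 \<le> P"
  shows "real n ^ 2 / P \<le> 1 / ln P ^ 2"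
proof -
  have "\<alpha> * real k / ln P \<le> real k / ln P"
    using mult_right_mono[OF assms(3), of "real k"] assms(2) by (simp add: divide_right_mono)
  then have "real n \<le> real k / ln P" using assms(4) by linarith
  then have "real n ^ 2 \<le> (real k / ln P) ^ 2" by (rule power_mono) simp
  also have "\<dots> = real k ^ 2 / ln P ^ 2" by (simp add: power_divide)
  also have "\<dots> \<le> P / ln P ^ 2" using assms(5) by (simp add: divide_right_mono)
  finally show ?thesis using assms(1) by (simp add: field_simps)
qed

lemma union_bound_le_inverse:
  fixes P \<alpha> :: real and k n m :: nat
  assumes "0 < P" "1 < ln P" "0 < \<alpha>" "\<alpha> \<le> 1"
    and "real n \<le> \<alpha> * real k / ln P" "\<alpha> * real k \<le> real m"
    and "ln P \<le> real k" "real k ^ 2 \<le> P"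
    and "(2 * \<alpha> + ln 2 + 1) / (2 * \<alpha>) \<le> ln (ln P)"
  shows "P ^ (2 * n) * 2 ^ k * (real n ^ 2 / P) ^ m \<le> 1 / P"
proof (cases "n = 0")
  case True
  have "0 < \<alpha> * real k" using assms(2,3,7) by simp
  then have "m \<noteq> 0" using assms(6) by linarith
  then show ?thesis using True assms(1) by (simp add: zero_power)
next
  case False
  define L where "L = ln P"
  define q where "q = real n ^ 2 / P"
  have "0 < q" unfolding q_def using False assms(1) by simp
  have "0 < ln L" using assms(2) unfolding L_def by simp
  have "ln q \<le> ln (1 / L ^ 2)"
    using square_ratio_le_inverse_ln_square[OF assms(1,2,4,5,8)] \<open>0 < q\<close>
    unfolding q_def L_def by (rule ln_mono)
  also have "\<dots> = - 2 * ln L" using assms(2) unfolding L_def by (simp add: ln_div ln_realpow)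
  finally have "real m * ln q \<le> real m * (- 2 * ln L)" by (rule mult_left_mono) simp
  also have "\<dots> \<le> \<alpha> * real k * (- 2 * ln L)"
    using assms(6) \<open>0 < ln L\<close> by (intro mult_right_mono_neg) auto
  finally have m_ln_q: "real m * ln q \<le> \<alpha> * real k * (- 2 * ln L)" .
  have "2 * \<alpha> + ln 2 + 1 \<le> 2 * \<alpha> * ln L"
    using assms(3,9) unfolding L_def by (simp add: pos_divide_le_eq mult.commute)
  then have k_ln_L: "real k * (2 * \<alpha> + ln 2 + 1) \<le> real k * (2 * \<alpha> * ln L)"
    by (rule mult_left_mono) simp
  have "real n * L \<le> \<alpha> * real k" using assms(2,5) unfolding L_def by (simp add: pos_le_divide_eq)
  moreover have "ln (P ^ (2 * n) * 2 ^ k * q ^ m) = 2 * real n * L + real k * ln 2 + real m * ln q"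
    using assms(1) \<open>0 < q\<close> unfolding L_def by (simp add: ln_mult ln_realpow)
  ultimately have "ln (P ^ (2 * n) * 2 ^ k * q ^ m) \<le> - real k"
    using m_ln_q k_ln_L by (simp add: algebra_simps)
  also have "\<dots> \<le> ln (1 / P)" using assms(1,7) by (simp add: ln_div)
  finally show ?thesis
    using assms(1) \<open>0 < q\<close> unfolding q_def[symmetric] by (subst (asm) ln_le_cancel_iff) auto
qed

lemma floor_powr_bounds:
  fixes x \<epsilon> :: real
  assumes "\<epsilon> \<le> 1/2" "1 \<le> x" "ln x \<le> x powr \<epsilon> - 1"
  shows "ln x \<le> real (nat \<lfloor>x powr \<epsilon>\<rfloor>)" "real (nat \<lfloor>x powr \<epsilon>\<rfloor>) ^ 2 \<le> x"
proof -
  have "real (nat \<lfloor>x powr \<epsilon>\<rfloor>) = of_int \<lfloor>x powr \<epsilon>\<rfloor>" by simp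
  then have k: "x powr \<epsilon> - 1 < real (nat \<lfloor>x powr \<epsilon>\<rfloor>)" "real (nat \<lfloor>x powr \<epsilon>\<rfloor>) \<le> x powr \<epsilon>"
    by linarith+
  then show "ln x \<le> real (nat \<lfloor>x powr \<epsilon>\<rfloor>)" using assms(3) by linarith
  have "x powr \<epsilon> \<le> x powr (1/2)" using assms by (intro powr_mono) auto
  then have "real (nat \<lfloor>x powr \<epsilon>\<rfloor>) \<le> x powr (1/2)" using k(2) by linarith
  then have "real (nat \<lfloor>x powr \<epsilon>\<rfloor>) ^ 2 \<le> (x powr (1/2)) ^ 2"
    by (rule power_mono) simp
  also have "\<dots> = x" using assms(2) by (simp add: powr_half_sqrt)
  finally show "real (nat \<lfloor>x powr \<epsilon>\<rfloor>) ^ 2 \<le> x" .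
qed

lemma card_low_complexity_le_fraction:
  fixes \<epsilon> \<alpha> :: real
  assumes "prime p" "\<epsilon> \<le> 1/2" "0 < \<alpha>" "\<alpha> \<le> 1"
    and ln_p: "1 < ln (real p)" "ln (real p) \<le> real p powr \<epsilon> - 1"
      "(2 * \<alpha> + ln 2 + 1) / (2 * \<alpha>) \<le> ln (ln (real p))"
    and k_def: "k = nat \<lfloor>real p powr \<epsilon>\<rfloor>" and n_def: "n = nat \<lfloor>\<alpha> * real k / ln (real p)\<rfloor>"
  shows "real (card {S. S \<subseteq> Zp p \<and> card S = k \<and> generic_complexity p \<alpha> S \<le> n})
    \<le> real (p choose k) / real p"
proof -
  define m where "m = nat \<lceil>\<alpha> * real k\<rceil>"
  have p_pos: "0 < real p" using assms(1) prime_gt_0_nat by simp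
  have k: "ln (real p) \<le> real k" "real k ^ 2 \<le> real p"
    using floor_powr_bounds[OF assms(2), of "real p"] ln_p p_pos unfolding k_def by auto
  have "0 < k" using k(1) ln_p by simp
  have "k ^ 2 \<le> p" using k(2) by (metis of_nat_le_iff of_nat_power)
  then have "k \<le> p" by (metis le_square order.trans power2_eq_square)
  have "real n \<le> \<alpha> * real k / ln (real p)"
    using assms(3) ln_p unfolding n_def by (simp add: of_nat_nat)
  moreover have "\<alpha> * real k \<le> real m" unfolding m_def by (rule real_nat_ceiling_ge)
  ultimately have "real p ^ (2 * n) * 2 ^ k * (real n ^ 2 / real p) ^ m \<le> 1 / real p"
    using union_bound_le_inverse[OF p_pos ln_p(1) assms(3,4) _ _ k ln_p(3)] by blast
  then have "real p ^ (2 * n) * 2 ^ k * (real n ^ 2 / real p) ^ m * real (p choose k)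
      \<le> 1 / real p * real (p choose k)"
    by (rule mult_right_mono) simp
  moreover have "real (card {S. S \<subseteq> Zp p \<and> card S = k \<and> generic_complexity p \<alpha> S \<le> n})
      \<le> real p ^ (2 * n) * 2 ^ k * (real n ^ 2 / real p) ^ m * real (p choose k)"
    using card_low_complexity_le[OF assms(1,3,4) \<open>0 < k\<close> \<open>k \<le> p\<close> m_def] .
  ultimately show ?thesis by simp
qed

lemma card_high_complexity_ge:
  fixes \<epsilon> \<alpha> :: real
  assumes "prime p" "\<epsilon> \<le> 1/2" "0 < \<alpha>" "\<alpha> \<le> 1"
    and "1 < ln (real p)" "ln (real p) \<le> real p powr \<epsilon> - 1"
      "(2 * \<alpha> + ln 2 + 1) / (2 * \<alpha>) \<le> ln (ln (real p))"
  shows "let k = nat \<lfloor>real p powr \<epsilon>\<rfloor> in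
      real (card {S. S \<subseteq> Zp p \<and> card S = k \<and>
                   real (generic_complexity p \<alpha> S) > \<alpha> * real (card S) / ln (real p)})
      \<ge> (1 - 1 / real p) * real (p choose k)"
proof -
  define k where "k = nat \<lfloor>real p powr \<epsilon>\<rfloor>"
  define n where "n = nat \<lfloor>\<alpha> * real k / ln (real p)\<rfloor>"
  define P where "P = (\<lambda>S. \<alpha> * real (card S) / ln (real p) < real (generic_complexity p \<alpha> S))"
  have "g \<le> n \<longleftrightarrow> real g \<le> \<alpha> * real k / ln (real p)" for g
    using assms(3,5) unfolding n_def by (simp add: le_nat_iff le_floor_iff)
  then have "{S. S \<subseteq> Zp p \<and> card S = k \<and> \<not> P S}
      = {S. S \<subseteq> Zp p \<and> card S = k \<and> generic_complexity p \<alpha> S \<le> n}"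
    unfolding P_def by (auto simp: not_less)
  then have "real (card {S. S \<subseteq> Zp p \<and> card S = k \<and> \<not> P S}) \<le> real (p choose k) / real p"
    using card_low_complexity_le_fraction[OF assms k_def n_def] by simp
  moreover have "real (card {S. S \<subseteq> Zp p \<and> card S = k \<and> P S})
      + real (card {S. S \<subseteq> Zp p \<and> card S = k \<and> \<not> P S}) = real (p choose k)"
    using card_subsets_filter[of "Zp p" k P] by (simp add: Zp_def flip: of_nat_add)
  ultimately have "(1 - 1 / real p) * real (p choose k)
      \<le> real (card {S. S \<subseteq> Zp p \<and> card S = k \<and> P S})"
    by (simp add: left_diff_distrib)
  then show ?thesis unfolding k_def[symmetric] P_def Let_def .
qed

theorem theorem3:
  fixes \<epsilon> \<alpha> :: real
  assumes "0 < \<epsilon>" "\<epsilon> \<le> 1/2" "0 < \<alpha>" "\<alpha> \<le> 1"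
  shows "\<exists>P0. \<forall>p::nat. prime p \<and> p \<ge> P0 \<longrightarrow>
    (let k = nat \<lfloor>real p powr \<epsilon>\<rfloor> in
      real (card {S. S \<subseteq> Zp p \<and> card S = k \<and>
                   real (generic_complexity p \<alpha> S) > \<alpha> * real (card S) / ln (real p)})
      \<ge> (1 - 1 / real p) * real (p choose k))"
proof -
  have "\<forall>\<^sub>F p in at_top. 1 < ln (real p) \<and> ln (real p) \<le> real p powr \<epsilon> - 1
      \<and> (2 * \<alpha> + ln 2 + 1) / (2 * \<alpha>) \<le> ln (ln (real p))"
    using assms(1) by (intro eventually_conj; real_asymp)
  then obtain P0 where "\<And>p. P0 \<le> p \<Longrightarrow> 1 < ln (real p) \<and> ln (real p) \<le> real p powr \<epsilon> - 1
      \<and> (2 * \<alpha> + ln 2 + 1) / (2 * \<alpha>) \<le> ln (ln (real p))"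
    unfolding eventually_at_top_linorder by blast
  then show ?thesis
    using card_high_complexity_ge[OF _ assms(2,3,4)] by blast
qed

end
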